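(* Let $\mathcal L$, $\mathcal P$ be series of the forms $\mathcal L=k+\sum_{n\ge1}u_n(s,t)k^{1-n}$, $\mathcal P=\sum_{n=0}^{N-1}p_n(s,t)k^{N-n}$ ($p_0\ne0$), and let $\mathcal M=\sum_{n\ge1}nt_n\mathcal L^{n-1}+x+Ns\mathcal L^{-1}+\sum_{n\ge1}v_n(s,t)\mathcal L^{-n-1}$. Then the system consisting of the $N$-dcmKP hierarchy for $(\mathcal L,\mathcal P)$ together with $$\frac{\partial\mathcal M}{\partial t_n}=\{\mathcal B_n,\mathcal M\}\ (n\ge1),\qquad \frac{\partial\mathcal M}{\partial s}=\{\log\mathcal P,\mathcal M\},\qquad \{\mathcal L,\mathcal M\}=1$$ is equivalent to the identity of 2-forms (exterior derivative in the variables $k,x,s,t$) $$d\mathcal L\wedge d\mathcal M=dk\wedge dx+\sum_{n\ge1}d\mathcal B_n\wedge dt_n+d\log\mathcal P\wedge ds.$$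
   Context: Fix a positive integer $N$. Independent variables are $k$ (spectral variable), $s$ (continuous), $x$ and $t=(t_1,t_2,\dots)$. The Poisson bracket is $\{f,g\}=\frac{\partial f}{\partial k}\frac{\partial g}{\partial x}-\frac{\partial f}{\partial x}\frac{\partial g}{\partial k}$. Projections $(\cdot)_{>0}$ refer to powers of $k$. $\log\mathcal P:=\log p_0+N\log k+\log(1+\sum_{n=1}^{N-1}(p_n/p_0)k^{-n})$ and $\log\mathcal L:=\log k+\log(\mathcal L/k)$, expanded in $k^{-1}$. The $N$-dcmKP hierarchy is $\partial_{t_n}\mathcal L=\{\mathcal B_n,\mathcal L\}$ with $\mathcal B_n:=(\mathcal L^n)_{>0}$, $\partial_s\mathcal L=\{\log\mathcal P,\mathcal L\}$, $\partial_{t_n}\log\mathcal P=\partial_s\mathcal B_n-\{\log\mathcal P,\mathcal B_n\}$ for $n\ge1$. *)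

theory Defs
  imports "HOL-Analysis.Analysis" "HOL-Computational_Algebra.Formal_Laurent_Series"
begin

text \<open>Formal series in the spectral variable k with at most finitely many positive
powers of k are represented as Laurent series in z = 1/k, i.e. as elements of
real fls: the coefficient of k^m of a series F is F at index -m.
A point of the (x,s,t) space is a triple (x, s, t) with t :: nat => real, where
t n is the time t_n (n >= 1); the dummy entry t 0 is required to be 0 and only
finitely many times are non-zero (the usual convention that makes the infinite
sum in M well defined).\<close>

type_synonym pt = "real \<times> real \<times> (nat \<Rightarrow> real)"

definition dom_pt :: "pt set" where
  "dom_pt = {(x, s, t). t 0 = 0 \<and> finite {n. t n \<noteq> 0}}"

datatype var = K | X | S | T nat

definition valid_var :: "var \<Rightarrow> bool" where
  "valid_var v = (case v of T n \<Rightarrow> n \<ge> 1 | _ \<Rightarrow> True)"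

text \<open>Moving a point along the coordinate line of a variable (k is formal and is
not a coordinate of the point).\<close>
fun shift :: "var \<Rightarrow> real \<Rightarrow> pt \<Rightarrow> pt" where
  "shift K h p = p"
| "shift X h (x, s, t) = (x + h, s, t)"
| "shift S h (x, s, t) = (x, s + h, t)"
| "shift (T n) h (x, s, t) = (x, s, t(n := t n + h))"

definition pdiff :: "var \<Rightarrow> (pt \<Rightarrow> real) \<Rightarrow> pt \<Rightarrow> real" where
  "pdiff v f p = deriv (\<lambda>h. f (shift v h p)) 0"

definition has_pdiffs :: "(pt \<Rightarrow> real) \<Rightarrow> bool" where
  "has_pdiffs f \<longleftrightarrow> (\<forall>p \<in> dom_pt. \<forall>v. valid_var v \<and> v \<noteq> K \<longrightarrow>
      (\<lambda>h. f (shift v h p)) differentiable (at 0))"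

text \<open>Build a Laurent series from a coefficient sequence (0 if the sequence is not
bounded below, which never happens for the series considered here).\<close>
definition fls_of :: "(int \<Rightarrow> real) \<Rightarrow> real fls" where
  "fls_of c = (if (\<forall>\<^sub>\<infinity> n::nat. c (- int n) = 0) then Abs_fls c else 0)"

text \<open>Partial derivatives of series-valued functions: d/dk = - z^2 d/dz, the other
partial derivatives act coefficientwise.\<close>
definition D :: "var \<Rightarrow> (pt \<Rightarrow> real fls) \<Rightarrow> pt \<Rightarrow> real fls" where
  "D v F p = (if v = K then - (fls_X ^ 2 * fls_deriv (F p))
              else fls_of (\<lambda>j. pdiff v (\<lambda>q. fls_nth (F q) j) p))"

text \<open>A 1-form (gradient) is given by its components along dk, dx, ds, dt_n.\<close>
type_synonym form1 = "var \<Rightarrow> pt \<Rightarrow> real fls"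

definition grad :: "(pt \<Rightarrow> real fls) \<Rightarrow> form1" where
  "grad F = (\<lambda>v. D v F)"

definition dvar :: "var \<Rightarrow> form1" where
  "dvar w = (\<lambda>v p. if v = w then 1 else 0)"

definition wedge :: "form1 \<Rightarrow> form1 \<Rightarrow> var \<Rightarrow> var \<Rightarrow> pt \<Rightarrow> real fls" where
  "wedge \<alpha> \<beta> a b p = \<alpha> a p * \<beta> b p - \<alpha> b p * \<beta> a p"

definition pb :: "form1 \<Rightarrow> form1 \<Rightarrow> pt \<Rightarrow> real fls" where
  "pb df dg p = df K p * dg X p - df X p * dg K p"

text \<open>Projection onto positive powers of k (= negative powers of z).\<close>
definition pos_part :: "real fls \<Rightarrow> real fls" where
  "pos_part f = fls_of (\<lambda>j. if j < 0 then fls_nth f j else 0)"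

definition Lser :: "(nat \<Rightarrow> pt \<Rightarrow> real) \<Rightarrow> pt \<Rightarrow> real fls" where
  "Lser u p = fls_of (\<lambda>j. if j = -1 then 1 else if j \<ge> 0 then u (nat j + 1) p else 0)"

definition Bser :: "(nat \<Rightarrow> pt \<Rightarrow> real) \<Rightarrow> nat \<Rightarrow> pt \<Rightarrow> real fls" where
  "Bser u n p = pos_part (Lser u p ^ n)"

text \<open>log P = log p_0 + N log k + log(1 + sum_{n=1}^{N-1} (p_n/p_0) k^(-n)); the
last logarithm is the formal series ln(1+w) composed with w.  Since log k and
log p_0 are not series, log P is handled through its gradient:
d(log p_0) = dp_0/p_0, d(N log k) = N/k dk.\<close>
definition logP_rest :: "nat \<Rightarrow> (nat \<Rightarrow> pt \<Rightarrow> real) \<Rightarrow> pt \<Rightarrow> real fls" where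
  "logP_rest N pp q = fps_to_fls (fps_ln 1 oo
      (\<Sum>n = 1..<N. fps_const (pp n q / pp 0 q) * fps_X ^ n))"

definition dlogP :: "nat \<Rightarrow> (nat \<Rightarrow> pt \<Rightarrow> real) \<Rightarrow> form1" where
  "dlogP N pp v q = (if v = K then of_nat N * fls_X + D K (logP_rest N pp) q
      else fls_const (pdiff v (pp 0) q / pp 0 q) + D v (logP_rest N pp) q)"

text \<open>The first sum is finite (finitely many t_n are non-zero); in the last sum only
finitely many terms contribute to each coefficient, since L^(-n-1) has leading
term k^(-n-1).\<close>
definition Mser :: "nat \<Rightarrow> (nat \<Rightarrow> pt \<Rightarrow> real) \<Rightarrow> (nat \<Rightarrow> pt \<Rightarrow> real) \<Rightarrow> pt \<Rightarrow> real fls" where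
  "Mser N u vv q = (case q of (x, s, t) \<Rightarrow>
      (\<Sum>n \<in> {n. n \<ge> 1 \<and> t n \<noteq> 0}. fls_const (of_nat n * t n) * Lser u q ^ (n - 1))
      + fls_const x + fls_const (of_nat N * s) * inverse (Lser u q)
      + fls_of (\<lambda>j. if j < 0 then 0 else
           (\<Sum>n = 1..nat j. vv n q * fls_nth (inverse (Lser u q) ^ (n + 1)) j)))"

definition dcmKP_system ::
  "nat \<Rightarrow> (nat \<Rightarrow> pt \<Rightarrow> real) \<Rightarrow> (nat \<Rightarrow> pt \<Rightarrow> real) \<Rightarrow> (nat \<Rightarrow> pt \<Rightarrow> real) \<Rightarrow> bool" where
  "dcmKP_system N u pp vv \<longleftrightarrow>
     (\<forall>q \<in> dom_pt.
        (\<forall>n \<ge> 1. D (T n) (Lser u) q = pb (grad (Bser u n)) (grad (Lser u)) q)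
      \<and> D S (Lser u) q = pb (dlogP N pp) (grad (Lser u)) q
      \<and> (\<forall>n \<ge> 1. dlogP N pp (T n) q
              = D S (Bser u n) q - pb (dlogP N pp) (grad (Bser u n)) q)
      \<and> (\<forall>n \<ge> 1. D (T n) (Mser N u vv) q = pb (grad (Bser u n)) (grad (Mser N u vv)) q)
      \<and> D S (Mser N u vv) q = pb (dlogP N pp) (grad (Mser N u vv)) q
      \<and> pb (grad (Lser u)) (grad (Mser N u vv)) q = 1)"

text \<open>dL /\ dM = dk /\ dx + sum_{n>=1} dB_n /\ dt_n + d log P /\ ds, compared
componentwise; for given a, b only the terms with n such that a = t_n or
b = t_n contribute to the da /\ db component.\<close>
definition two_form_identity ::
  "nat \<Rightarrow> (nat \<Rightarrow> pt \<Rightarrow> real) \<Rightarrow> (nat \<Rightarrow> pt \<Rightarrow> real) \<Rightarrow> (nat \<Rightarrow> pt \<Rightarrow> real) \<Rightarrow> bool" where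
  "two_form_identity N u pp vv \<longleftrightarrow>
     (\<forall>q \<in> dom_pt. \<forall>a b. valid_var a \<and> valid_var b \<longrightarrow>
        wedge (grad (Lser u)) (grad (Mser N u vv)) a b q
        = wedge (dvar K) (dvar X) a b q
          + (\<Sum>n \<in> {n. n \<ge> 1 \<and> (a = T n \<or> b = T n)}. wedge (grad (Bser u n)) (dvar (T n)) a b q)
          + wedge (dlogP N pp) (dvar S) a b q)"

end

theory Submission
  imports Defs
begin

text \<open>All flows of the system are Hamiltonian: with \<open>H\<^sub>k = -x\<close>, \<open>H\<^sub>x = k\<close>,
  \<open>H\<^sub>s = log P\<close> and \<open>H\<^sub>t\<^sub>n = B\<^sub>n\<close> the equations for \<open>L\<close> and \<open>M\<close> read
  \<open>\<partial>\<^sub>v F = {H\<^sub>v, F}\<close>. Given \<open>{L, M} = 1\<close>, the \<open>(k, v)\<close>- and \<open>(x, v)\<close>-components of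
  \<open>dL \<wedge> dM = \<Sum>\<^sub>v\<^sub>\<noteq>\<^sub>k dH\<^sub>v \<wedge> dv\<close> say exactly that \<open>\<partial>\<^sub>v L\<close> and \<open>\<partial>\<^sub>v M\<close> are these
  Hamiltonian flows, and then the \<open>(a, b)\<close>-component of \<open>dL \<wedge> dM\<close> is \<open>{H\<^sub>a, H\<^sub>b}\<close>.
  The remaining components thus become the equation for \<open>\<partial>\<^sub>t\<^sub>n log P\<close> and the
  zero-curvature equations \<open>\<partial>\<^sub>t\<^sub>m B\<^sub>n - \<partial>\<^sub>t\<^sub>n B\<^sub>m = {B\<^sub>m, B\<^sub>n}\<close>. The latter follow from
  the Lax equations by splitting \<open>L\<^sup>n = B\<^sub>n + (L\<^sup>n)\<^sub>\<le>\<^sub>0\<close>: \<open>{B\<^sub>m, B\<^sub>n}\<close> has only positive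
  powers of \<open>k\<close>, while \<open>{(L\<^sup>m)\<^sub>\<le>\<^sub>0, (L\<^sup>n)\<^sub>\<le>\<^sub>0}\<close> has none.\<close>

lemma shift_0 [simp]: "shift v 0 q = q"
  by (cases v; cases q) auto

lemma fls_nth_fls_of:
  assumes "\<forall>j<a. c j = 0"
  shows "fls_nth (fls_of c) j = c j"
proof -
  have "\<forall>\<^sub>\<infinity> n::nat. c (- int n) = 0"
    unfolding MOST_nat using assms by (intro exI[of _ "nat (- a)"]) auto
  then show ?thesis
    unfolding fls_of_def by simp
qed

lemma fls_times_nth_bounded:
  fixes f g :: "'a::comm_ring_1 fls"
  assumes f: "\<forall>i<a. fls_nth f i = 0" and g: "\<forall>i<b. fls_nth g i = 0"
  shows "fls_nth (f * g) n = (\<Sum>i = a..n - b. fls_nth f i * fls_nth g (n - i))"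
proof (cases "f = 0 \<or> g = 0")
  case True
  then show ?thesis by auto
next
  case False
  then have "a \<le> fls_subdegree f" and "b \<le> fls_subdegree g"
    using f g by (auto intro: fls_subdegree_geI)
  then have "{fls_subdegree f..n - fls_subdegree g} \<subseteq> {a..n - b}"
    by auto
  moreover have "fls_nth f i * fls_nth g (n - i) = 0"
    if "i \<notin> {fls_subdegree f..n - fls_subdegree g}" for i
    using that by (cases "i < fls_subdegree f") auto
  ultimately show ?thesis
    unfolding fls_times_nth(2) by (intro sum.mono_neutral_left) auto
qed

lemma fls_times_nth_eq_0_below:
  fixes f g :: "'a::comm_ring_1 fls"
  assumes "\<forall>i<a. fls_nth f i = 0" and "\<forall>i<b. fls_nth g i = 0" and "n < a + b"
  shows "fls_nth (f * g) n = 0"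
  unfolding fls_times_nth_bounded[OF assms(1,2)] using assms(3) by simp

lemma fls_times_nth_eq_0_above:
  fixes f g :: "'a::comm_ring_1 fls"
  assumes f: "\<forall>i>a. fls_nth f i = 0" and g: "\<forall>i>b. fls_nth g i = 0" and "n > a + b"
  shows "fls_nth (f * g) n = 0"
  unfolding fls_times_nth(2)
proof (intro sum.neutral ballI)
  fix i
  show "fls_nth f i * fls_nth g (n - i) = 0"
    using f g[rule_format, of "n - i"] \<open>n > a + b\<close> by (cases "i > a") auto
qed

lemma pos_part_nth: "fls_nth (pos_part f) j = (if j < 0 then fls_nth f j else 0)"
proof -
  obtain a where "\<forall>n<a. fls_nth f n = 0"
    by (rule fls_nth_vanishes_belowE)
  then show ?thesis
    unfolding pos_part_def by (intro fls_nth_fls_of[of "min a 0"]) auto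
qed

lemma pos_part_diff: "pos_part (f - g) = pos_part f - pos_part g"
  by (rule fls_eqI) (simp add: pos_part_nth)

lemma pos_part_mult_eq_self:
  assumes "\<forall>j>0. fls_nth f j = 0" and "\<forall>j>-1. fls_nth g j = 0"
  shows "pos_part (f * g) = f * g"
  by (rule fls_eqI) (use fls_times_nth_eq_0_above[OF assms] in \<open>simp add: pos_part_nth\<close>)

lemma pos_part_mult_eq_0:
  assumes "\<forall>j<1. fls_nth f j = 0" and "\<forall>j<0. fls_nth g j = 0"
  shows "pos_part (f * g) = 0"
  by (rule fls_eqI) (use fls_times_nth_eq_0_below[OF assms] in \<open>simp add: pos_part_nth\<close>)

definition bounded_below_along :: "var \<Rightarrow> (pt \<Rightarrow> real fls) \<Rightarrow> pt \<Rightarrow> bool" where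
  "bounded_below_along v F q \<longleftrightarrow> (\<exists>a. \<forall>h j. j < a \<longrightarrow> fls_nth (F (shift v h q)) j = 0)"

definition coeffwise_differentiable :: "var \<Rightarrow> (pt \<Rightarrow> real fls) \<Rightarrow> pt \<Rightarrow> bool" where
  "coeffwise_differentiable v F q \<longleftrightarrow> bounded_below_along v F q \<and>
     (\<forall>j. (\<lambda>h. fls_nth (F (shift v h q)) j) differentiable (at 0))"

lemma fls_nth_D:
  assumes "v \<noteq> K" and a: "\<forall>h j. j < a \<longrightarrow> fls_nth (F (shift v h q)) j = 0"
  shows "fls_nth (D v F q) j = deriv (\<lambda>h. fls_nth (F (shift v h q)) j) 0"
proof -
  have "(\<lambda>h. fls_nth (F (shift v h q)) i) = (\<lambda>h. 0)" if "i < a" for i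
    using a that by auto
  then have "\<forall>i<a. deriv (\<lambda>h. fls_nth (F (shift v h q)) i) 0 = 0"
    by simp
  then show ?thesis
    using \<open>v \<noteq> K\<close> unfolding D_def pdiff_def by (simp add: fls_nth_fls_of)
qed

lemma fls_nth_D_eq_0_below:
  assumes "v \<noteq> K" and a: "\<forall>h j. j < a \<longrightarrow> fls_nth (F (shift v h q)) j = 0" and "j < a"
  shows "fls_nth (D v F q) j = 0"
proof -
  have "(\<lambda>h. fls_nth (F (shift v h q)) j) = (\<lambda>h. 0)"
    using a \<open>j < a\<close> by auto
  then show ?thesis
    unfolding fls_nth_D[OF assms(1,2)] by simp
qed

lemma has_real_derivative_fls_nth_D:
  assumes "v \<noteq> K" and "coeffwise_differentiable v F q"
  shows "((\<lambda>h. fls_nth (F (shift v h q)) j) has_real_derivative fls_nth (D v F q) j) (at 0)"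
proof -
  obtain a where a: "\<forall>h j. j < a \<longrightarrow> fls_nth (F (shift v h q)) j = 0"
    using assms(2) unfolding coeffwise_differentiable_def bounded_below_along_def by blast
  have "(\<lambda>h. fls_nth (F (shift v h q)) j) differentiable (at 0)"
    using assms(2) unfolding coeffwise_differentiable_def by blast
  then show ?thesis
    unfolding fls_nth_D[OF assms(1) a] by (simp add: DERIV_deriv_iff_real_differentiable)
qed

lemma D_eqI:
  assumes "v \<noteq> K" and "bounded_below_along v F q"
    and "\<And>j. ((\<lambda>h. fls_nth (F (shift v h q)) j) has_real_derivative fls_nth G j) (at 0)"
  shows "D v F q = G"
proof (rule fls_eqI)
  fix j
  have "coeffwise_differentiable v F q"
    using assms(2,3) unfolding coeffwise_differentiable_def real_differentiable_def by blast
  then show "fls_nth (D v F q) j = fls_nth G j"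
    using DERIV_unique assms(3) has_real_derivative_fls_nth_D[OF assms(1)] by blast
qed

lemma coeffwise_differentiable_const: "coeffwise_differentiable v (\<lambda>p. c) q"
proof -
  obtain a where "\<forall>j<a. fls_nth c j = 0"
    by (rule fls_nth_vanishes_belowE)
  then show ?thesis
    unfolding coeffwise_differentiable_def bounded_below_along_def by auto
qed

lemma D_const: "v \<noteq> K \<Longrightarrow> D v (\<lambda>p. c) q = 0"
  using coeffwise_differentiable_const
  by (intro D_eqI) (auto simp: coeffwise_differentiable_def)

lemma bounded_below_along_mult:
  assumes "bounded_below_along v F q" and "bounded_below_along v G q"
  shows "bounded_below_along v (\<lambda>p. F p * G p) q"
proof -
  obtain a where a: "\<forall>h j. j < a \<longrightarrow> fls_nth (F (shift v h q)) j = 0"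
    using assms(1) unfolding bounded_below_along_def by blast
  obtain b where b: "\<forall>h j. j < b \<longrightarrow> fls_nth (G (shift v h q)) j = 0"
    using assms(2) unfolding bounded_below_along_def by blast
  have "fls_nth (F (shift v h q) * G (shift v h q)) j = 0" if "j < a + b" for h j
    using a b that by (intro fls_times_nth_eq_0_below[of a _ b]) auto
  then show ?thesis
    unfolding bounded_below_along_def by blast
qed

lemma has_real_derivative_fls_nth_mult:
  assumes v: "v \<noteq> K" and F: "coeffwise_differentiable v F q" and G: "coeffwise_differentiable v G q"
  shows "((\<lambda>h. fls_nth (F (shift v h q) * G (shift v h q)) n) has_real_derivative
           fls_nth (D v F q * G q + F q * D v G q) n) (at 0)"
proof -
  obtain a where a: "\<forall>h j. j < a \<longrightarrow> fls_nth (F (shift v h q)) j = 0"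
    using F unfolding coeffwise_differentiable_def bounded_below_along_def by blast
  obtain b where b: "\<forall>h j. j < b \<longrightarrow> fls_nth (G (shift v h q)) j = 0"
    using G unfolding coeffwise_differentiable_def bounded_below_along_def by blast
  define f where "f i h = fls_nth (F (shift v h q)) i" for i h
  define g where "g i h = fls_nth (G (shift v h q)) i" for i h
  have "((\<lambda>h. \<Sum>i = a..n - b. f i h * g (n - i) h) has_real_derivative
      (\<Sum>i = a..n - b. f i 0 * fls_nth (D v G q) (n - i) + fls_nth (D v F q) i * g (n - i) 0)) (at 0)"
    unfolding f_def g_def
    by (intro DERIV_sum DERIV_mult' has_real_derivative_fls_nth_D v F G)
  moreover have "fls_nth (F (shift v h q) * G (shift v h q)) n = (\<Sum>i = a..n - b. f i h * g (n - i) h)" for h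
    unfolding f_def g_def using a b by (intro fls_times_nth_bounded) auto
  moreover have "(\<Sum>i = a..n - b. f i 0 * fls_nth (D v G q) (n - i) + fls_nth (D v F q) i * g (n - i) 0)
      = fls_nth (D v F q * G q + F q * D v G q) n"
  proof -
    have DF: "\<forall>i<a. fls_nth (D v F q) i = 0" and DG: "\<forall>i<b. fls_nth (D v G q) i = 0"
      using fls_nth_D_eq_0_below[OF v a] fls_nth_D_eq_0_below[OF v b] by blast+
    have Fq: "\<forall>i<a. fls_nth (F q) i = 0" and Gq: "\<forall>i<b. fls_nth (G q) i = 0"
      using a[rule_format, of _ 0] b[rule_format, of _ 0] by simp_all
    show ?thesis
      by (simp add: fls_times_nth_bounded[OF DF Gq] fls_times_nth_bounded[OF Fq DG]
          sum.distrib f_def g_def)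
  qed
  ultimately show ?thesis
    by simp
qed

lemma coeffwise_differentiable_mult:
  assumes "v \<noteq> K" "coeffwise_differentiable v F q" "coeffwise_differentiable v G q"
  shows "coeffwise_differentiable v (\<lambda>p. F p * G p) q"
  using assms bounded_below_along_mult has_real_derivative_fls_nth_mult
  unfolding coeffwise_differentiable_def real_differentiable_def by blast

lemma D_mult:
  assumes "v \<noteq> K" "coeffwise_differentiable v F q" "coeffwise_differentiable v G q"
  shows "D v (\<lambda>p. F p * G p) q = D v F q * G q + F q * D v G q"
  using assms bounded_below_along_mult has_real_derivative_fls_nth_mult
  unfolding coeffwise_differentiable_def by (intro D_eqI) blast+

lemma coeffwise_differentiable_power:
  assumes "v \<noteq> K" "coeffwise_differentiable v F q"
  shows "coeffwise_differentiable v (\<lambda>p. F p ^ n) q"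
  by (induction n) (simp_all add: coeffwise_differentiable_const coeffwise_differentiable_mult assms)

lemma D_power:
  assumes "v \<noteq> K" "coeffwise_differentiable v F q"
  shows "D v (\<lambda>p. F p ^ n) q = of_nat n * F q ^ (n - 1) * D v F q"
proof (induction n)
  case 0
  then show ?case
    using D_const[OF assms(1)] by simp
next
  case (Suc n)
  have "D v (\<lambda>p. F p ^ Suc n) q = D v F q * F q ^ n + F q * D v (\<lambda>p. F p ^ n) q"
    using D_mult[OF assms coeffwise_differentiable_power[OF assms]] by simp
  also have "\<dots> = of_nat (Suc n) * F q ^ n * D v F q"
    unfolding Suc.IH by (cases n) (simp_all add: algebra_simps)
  finally show ?case
    by simp
qed

lemma coeffwise_differentiable_pos_part:
  assumes "coeffwise_differentiable v F q"
  shows "coeffwise_differentiable v (\<lambda>p. pos_part (F p)) q"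
proof -
  obtain a where "\<forall>h j. j < a \<longrightarrow> fls_nth (F (shift v h q)) j = 0"
    using assms unfolding coeffwise_differentiable_def bounded_below_along_def by blast
  then have "bounded_below_along v (\<lambda>p. pos_part (F p)) q"
    unfolding bounded_below_along_def pos_part_nth by auto
  moreover have "(\<lambda>h. if j < 0 then fls_nth (F (shift v h q)) j else 0) differentiable (at 0)" for j
    using assms unfolding coeffwise_differentiable_def by (cases "j < 0") auto
  ultimately show ?thesis
    unfolding coeffwise_differentiable_def pos_part_nth by blast
qed

lemma D_pos_part:
  assumes "v \<noteq> K" "coeffwise_differentiable v F q"
  shows "D v (\<lambda>p. pos_part (F p)) q = pos_part (D v F q)"
proof (rule D_eqI[OF assms(1)])
  show "bounded_below_along v (\<lambda>p. pos_part (F p)) q"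
    using coeffwise_differentiable_pos_part[OF assms(2)] unfolding coeffwise_differentiable_def ..
  show "((\<lambda>h. fls_nth (pos_part (F (shift v h q))) j) has_real_derivative
         fls_nth (pos_part (D v F q)) j) (at 0)" for j
    using has_real_derivative_fls_nth_D[OF assms] by (simp add: pos_part_nth)
qed

lemma fls_nth_D_K: "fls_nth (D K F q) j = - (of_int (j - 1) * fls_nth (F q) (j - 1))"
  unfolding D_def by (simp add: fls_X_power_times_conv_shift(1))

lemma D_K_power: "D K (\<lambda>p. F p ^ n) q = of_nat n * F q ^ (n - 1) * D K F q"
  unfolding D_def by (simp add: fls_deriv_power algebra_simps)

subsection \<open>The zero-curvature equations\<close>

lemma fls_nth_Lser:
  "fls_nth (Lser u p) j = (if j = -1 then 1 else if j \<ge> 0 then u (nat j + 1) p else 0)"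
  unfolding Lser_def by (rule fls_nth_fls_of[of "-1"]) auto

lemma coeffwise_differentiable_Lser:
  assumes "\<forall>n\<ge>1. has_pdiffs (u n)" and "q \<in> dom_pt" and "valid_var v" and "v \<noteq> K"
  shows "coeffwise_differentiable v (Lser u) q"
proof -
  have "(\<lambda>h. u (nat j + 1) (shift v h q)) differentiable (at 0)" for j
    using assms unfolding has_pdiffs_def by auto
  then have "(\<lambda>h. if j = -1 then 1 else if j \<ge> 0 then u (nat j + 1) (shift v h q) else 0)
      differentiable (at 0)" for j
    by (cases "j = -1"; cases "j \<ge> 0") simp_all
  moreover have "\<forall>h j. j < -1 \<longrightarrow> fls_nth (Lser u (shift v h q)) j = 0"
    by (simp add: fls_nth_Lser)
  ultimately show ?thesis
    unfolding coeffwise_differentiable_def bounded_below_along_def fls_nth_Lser by blast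
qed

lemma pb_grad_power:
  assumes "coeffwise_differentiable X F q"
  shows "pb G (grad (\<lambda>p. F p ^ n)) q = of_nat n * F q ^ (n - 1) * pb G (grad F) q"
  unfolding pb_def grad_def D_K_power D_power[OF _ assms, simplified] by (simp add: algebra_simps)

lemma pb_grad_powers_eq_0:
  assumes "coeffwise_differentiable X F q"
  shows "pb (grad (\<lambda>p. F p ^ m)) (grad (\<lambda>p. F p ^ n)) q = 0"
  unfolding pb_def grad_def D_K_power D_power[OF _ assms, simplified] by (simp add: algebra_simps)

text \<open>What the Poisson bracket sees of the relation between the gradients of \<open>F\<^sub>>\<^sub>0\<close>
  and of \<open>F\<close>: \<open>d/dk\<close> maps positive powers of \<open>k\<close> to non-negative ones and non-positive
  powers to negative ones, while \<open>d/dx\<close> preserves the splitting.\<close>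

definition is_pos_part_grad :: "form1 \<Rightarrow> form1 \<Rightarrow> pt \<Rightarrow> bool" where
  "is_pos_part_grad B P q \<longleftrightarrow> (\<forall>j>0. fls_nth (B K q) j = 0)
     \<and> (\<forall>j<1. fls_nth (P K q - B K q) j = 0) \<and> B X q = pos_part (P X q)"

lemma is_pos_part_grad_pos_part:
  assumes "coeffwise_differentiable X F q"
  shows "is_pos_part_grad (grad (\<lambda>p. pos_part (F p))) (grad F) q"
  unfolding is_pos_part_grad_def grad_def D_pos_part[OF _ assms, simplified]
  by (simp add: fls_nth_D_K pos_part_nth)

lemma pos_part_pb_difference:
  assumes Bm: "is_pos_part_grad Bm Pm q" and Bn: "is_pos_part_grad Bn Pn q"
    and "pb Pm Pn q = 0"
  shows "pos_part (pb Bm Pn q - pb Bn Pm q) = pb Bm Bn q"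
proof -
  define R where "R P B v = P v q - B v q" for P B :: form1 and v
  have "pb Bm Pn q - pb Bn Pm q
      = pb Bm Bn q - (R Pm Bm K * R Pn Bn X - R Pm Bm X * R Pn Bn K) + pb Pm Pn q"
    unfolding pb_def R_def by (simp add: algebra_simps)
  moreover have "pos_part (Bm K q * Bn X q) = Bm K q * Bn X q"
    and "pos_part (Bn K q * Bm X q) = Bn K q * Bm X q"
    using Bm Bn unfolding is_pos_part_grad_def by (simp_all add: pos_part_mult_eq_self pos_part_nth)
  then have "pos_part (pb Bm Bn q) = pb Bm Bn q"
    unfolding pb_def by (simp add: pos_part_diff mult.commute[of "Bm X q"])
  moreover have "pos_part (R Pm Bm K * R Pn Bn X) = 0" and "pos_part (R Pn Bn K * R Pm Bm X) = 0"
    using Bm Bn unfolding is_pos_part_grad_def R_def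
    by (simp_all add: pos_part_mult_eq_0 pos_part_nth)
  ultimately show ?thesis
    using \<open>pb Pm Pn q = 0\<close> by (simp add: pos_part_diff mult.commute[of "R Pm Bm X"])
qed

lemma D_Bser_eq_pos_part_pb:
  assumes u: "\<forall>n\<ge>1. has_pdiffs (u n)" and q: "q \<in> dom_pt" and "valid_var v" "v \<noteq> K"
    and "D v (Lser u) q = pb G (grad (Lser u)) q"
  shows "D v (Bser u n) q = pos_part (pb G (grad (\<lambda>p. Lser u p ^ n)) q)"
proof -
  have Lv: "coeffwise_differentiable v (Lser u) q" and LX: "coeffwise_differentiable X (Lser u) q"
    using coeffwise_differentiable_Lser[OF u q] assms(3,4) by (auto simp: valid_var_def)
  have "D v (Bser u n) q = pos_part (D v (\<lambda>p. Lser u p ^ n) q)"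
    unfolding Bser_def using D_pos_part[OF \<open>v \<noteq> K\<close> coeffwise_differentiable_power[OF \<open>v \<noteq> K\<close> Lv]]
    by simp
  also have "\<dots> = pos_part (pb G (grad (\<lambda>p. Lser u p ^ n)) q)"
    unfolding D_power[OF \<open>v \<noteq> K\<close> Lv] pb_grad_power[OF LX] assms(5) ..
  finally show ?thesis .
qed

lemma zero_curvature:
  assumes u: "\<forall>n\<ge>1. has_pdiffs (u n)" and q: "q \<in> dom_pt" and "m \<ge> 1" "n \<ge> 1"
    and lax: "\<forall>n\<ge>1. D (T n) (Lser u) q = pb (grad (Bser u n)) (grad (Lser u)) q"
  shows "D (T m) (Bser u n) q - D (T n) (Bser u m) q = pb (grad (Bser u m)) (grad (Bser u n)) q"
proof -
  have LX: "coeffwise_differentiable X (Lser u) q"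
    using coeffwise_differentiable_Lser[OF u q] by (simp add: valid_var_def)
  define P where "P i = grad (\<lambda>p. Lser u p ^ i)" for i
  have B: "is_pos_part_grad (grad (Bser u i)) (P i) q" for i
    unfolding P_def Bser_def
    using is_pos_part_grad_pos_part[OF coeffwise_differentiable_power[OF _ LX]] by simp
  have "D (T m) (Bser u n) q - D (T n) (Bser u m) q
      = pos_part (pb (grad (Bser u m)) (P n) q - pb (grad (Bser u n)) (P m) q)"
    using D_Bser_eq_pos_part_pb[OF u q] lax \<open>m \<ge> 1\<close> \<open>n \<ge> 1\<close>
    by (simp add: P_def pos_part_diff valid_var_def)
  also have "\<dots> = pb (grad (Bser u m)) (grad (Bser u n)) q"
    using pos_part_pb_difference[OF B B] pb_grad_powers_eq_0[OF LX] by (simp add: P_def)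
  finally show ?thesis .
qed

subsection \<open>Hamiltonian flows of a canonical pair\<close>

definition hamilton_eqs :: "(var \<Rightarrow> form1) \<Rightarrow> (pt \<Rightarrow> real fls) \<Rightarrow> pt \<Rightarrow> bool" where
  "hamilton_eqs H F q \<longleftrightarrow> (\<forall>v. valid_var v \<longrightarrow> D v F q = pb (H v) (grad F) q)"

lemma hamilton_eq_iff_ring:
  fixes FK FX GK GX Fa Ga hK hX :: "'a::comm_ring_1"
  assumes "FK * GX - FX * GK = 1"
  shows "(Fa = hK * FX - hX * FK \<and> Ga = hK * GX - hX * GK)
    \<longleftrightarrow> (FK * Ga - Fa * GK = hK \<and> FX * Ga - Fa * GX = hX)"
proof
  assume h: "Fa = hK * FX - hX * FK \<and> Ga = hK * GX - hX * GK"
  have "FK * Ga - Fa * GK = hK * (FK * GX - FX * GK)"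
    and "FX * Ga - Fa * GX = hX * (FK * GX - FX * GK)"
    unfolding h[THEN conjunct1] h[THEN conjunct2] by (simp_all add: algebra_simps)
  with assms show "FK * Ga - Fa * GK = hK \<and> FX * Ga - Fa * GX = hX"
    by simp
next
  assume h: "FK * Ga - Fa * GK = hK \<and> FX * Ga - Fa * GX = hX"
  have "Fa = Fa * (FK * GX - FX * GK)" and "Ga = Ga * (FK * GX - FX * GK)"
    using assms by simp_all
  then show "Fa = hK * FX - hX * FK \<and> Ga = hK * GX - hX * GK"
    unfolding h[THEN conjunct1, symmetric] h[THEN conjunct2, symmetric] by (simp_all add: algebra_simps)
qed

lemma hamilton_eqs_iff_wedge:
  assumes "pb (grad F) (grad G) q = 1"
  shows "hamilton_eqs H F q \<and> hamilton_eqs H G q \<longleftrightarrow>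
    (\<forall>v. valid_var v \<longrightarrow>
       wedge (grad F) (grad G) K v q = H v K q \<and> wedge (grad F) (grad G) X v q = H v X q)"
  using hamilton_eq_iff_ring[OF assms[unfolded pb_def grad_def]]
  unfolding hamilton_eqs_def wedge_def pb_def grad_def by blast

lemma wedge_eq_ring:
  fixes FK FX GK GX Fa Ga Fb Gb aK aX bK bX :: "'a::comm_ring_1"
  assumes "FK * GX - FX * GK = 1"
    and "Fa = aK * FX - aX * FK" "Ga = aK * GX - aX * GK"
    and "Fb = bK * FX - bX * FK" "Gb = bK * GX - bX * GK"
  shows "Fa * Gb - Fb * Ga = aK * bX - aX * bK"
proof -
  have "Fa * Gb - Fb * Ga = (aK * bX - aX * bK) * (FK * GX - FX * GK)"
    unfolding assms(2-5) by (simp add: algebra_simps)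
  with assms(1) show ?thesis
    by simp
qed

lemma wedge_eq_pb_hamiltonians:
  assumes "pb (grad F) (grad G) q = 1" and "hamilton_eqs H F q" and "hamilton_eqs H G q"
    and "valid_var a" and "valid_var b"
  shows "wedge (grad F) (grad G) a b q = pb (H a) (H b) q"
  using assms unfolding hamilton_eqs_def wedge_def pb_def grad_def by (intro wedge_eq_ring) auto

text \<open>The gradients of the Hamiltonians of the flows: \<open>H\<^sub>k = -x\<close>, \<open>H\<^sub>x = k\<close>,
  \<open>H\<^sub>s = log P\<close> and \<open>H\<^sub>t\<^sub>n = B\<^sub>n\<close>.\<close>

definition hamiltonian :: "nat \<Rightarrow> (nat \<Rightarrow> pt \<Rightarrow> real) \<Rightarrow> (nat \<Rightarrow> pt \<Rightarrow> real) \<Rightarrow> var \<Rightarrow> form1" where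
  "hamiltonian N u pp v = (case v of
      K \<Rightarrow> (\<lambda>w p. - dvar X w p) | X \<Rightarrow> dvar K | S \<Rightarrow> dlogP N pp | T n \<Rightarrow> grad (Bser u n))"

lemma all_valid_var_iff:
  "(\<forall>v. valid_var v \<longrightarrow> P v) \<longleftrightarrow> P K \<and> P X \<and> P S \<and> (\<forall>n\<ge>1. P (T n))"
proof (intro iffI allI impI)
  fix v
  assume "P K \<and> P X \<and> P S \<and> (\<forall>n\<ge>1. P (T n))" and "valid_var v"
  then show "P v"
    by (cases v) (auto simp: valid_var_def)
qed (auto simp: valid_var_def)

lemma hamilton_eqs_hamiltonian_iff:
  "hamilton_eqs (hamiltonian N u pp) F q \<longleftrightarrow>
     D S F q = pb (dlogP N pp) (grad F) q \<and> (\<forall>n\<ge>1. D (T n) F q = pb (grad (Bser u n)) (grad F) q)"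
  unfolding hamilton_eqs_def all_valid_var_iff
  by (simp add: hamiltonian_def pb_def grad_def dvar_def)

definition dcmKP_hamiltonian_at ::
  "nat \<Rightarrow> (nat \<Rightarrow> pt \<Rightarrow> real) \<Rightarrow> (nat \<Rightarrow> pt \<Rightarrow> real) \<Rightarrow> (nat \<Rightarrow> pt \<Rightarrow> real) \<Rightarrow> pt \<Rightarrow> bool" where
  "dcmKP_hamiltonian_at N u pp vv q \<longleftrightarrow>
     pb (grad (Lser u)) (grad (Mser N u vv)) q = 1
     \<and> hamilton_eqs (hamiltonian N u pp) (Lser u) q
     \<and> hamilton_eqs (hamiltonian N u pp) (Mser N u vv) q
     \<and> (\<forall>n\<ge>1. dlogP N pp (T n) q = D S (Bser u n) q - pb (dlogP N pp) (grad (Bser u n)) q)"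

lemma dcmKP_system_iff_hamiltonian:
  "dcmKP_system N u pp vv \<longleftrightarrow> (\<forall>q\<in>dom_pt. dcmKP_hamiltonian_at N u pp vv q)"
  unfolding dcmKP_system_def dcmKP_hamiltonian_at_def hamilton_eqs_hamiltonian_iff by blast

text \<open>The 2-form \<open>\<Sum>\<^sub>v\<^sub>\<noteq>\<^sub>k dH\<^sub>v \<and> dv\<close> evaluated on \<open>(a, b)\<close>.\<close>

definition hamiltonian_two_form :: "(var \<Rightarrow> form1) \<Rightarrow> var \<Rightarrow> var \<Rightarrow> pt \<Rightarrow> real fls" where
  "hamiltonian_two_form H a b q = (if b = K then 0 else H b a q) - (if a = K then 0 else H a b q)"

lemma two_form_rhs_eq:
  assumes "valid_var a" and "valid_var b"
  shows "wedge (dvar K) (dvar X) a b q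
      + (\<Sum>n \<in> {n. n \<ge> 1 \<and> (a = T n \<or> b = T n)}. wedge (grad (Bser u n)) (dvar (T n)) a b q)
      + wedge (dlogP N pp) (dvar S) a b q
    = hamiltonian_two_form (hamiltonian N u pp) a b q"
proof -
  have "{n. n \<ge> 1 \<and> (a = T n \<or> b = T n)} = {n. a = T n} \<union> {n. b = T n}"
    using assms by (auto simp: valid_var_def)
  then show ?thesis
    by (cases a; cases b)
      (auto simp: hamiltonian_two_form_def hamiltonian_def wedge_def dvar_def grad_def sum.insert_if)
qed

lemma pb_hamiltonian_eq_two_form:
  assumes "\<forall>m\<ge>1. \<forall>n\<ge>1.
      D (T m) (Bser u n) q - D (T n) (Bser u m) q = pb (grad (Bser u m)) (grad (Bser u n)) q"
    and "\<forall>n\<ge>1. dlogP N pp (T n) q = D S (Bser u n) q - pb (dlogP N pp) (grad (Bser u n)) q"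
    and "valid_var a" and "valid_var b"
  shows "pb (hamiltonian N u pp a) (hamiltonian N u pp b) q = hamiltonian_two_form (hamiltonian N u pp) a b q"
  using assms
  by (cases a; cases b)
    (auto simp: hamiltonian_two_form_def hamiltonian_def valid_var_def pb_def dvar_def grad_def algebra_simps)

lemma two_form_identity_at_iff:
  assumes u: "\<forall>n\<ge>1. has_pdiffs (u n)" and q: "q \<in> dom_pt"
  shows "(\<forall>a b. valid_var a \<and> valid_var b \<longrightarrow> wedge (grad (Lser u)) (grad (Mser N u vv)) a b q
            = hamiltonian_two_form (hamiltonian N u pp) a b q)
    \<longleftrightarrow> dcmKP_hamiltonian_at N u pp vv q"
    (is "(\<forall>a b. _ \<longrightarrow> ?W a b = ?\<Omega> a b) \<longleftrightarrow> _")
proof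
  assume I: "\<forall>a b. valid_var a \<and> valid_var b \<longrightarrow> ?W a b = ?\<Omega> a b"
  then have LM: "pb (grad (Lser u)) (grad (Mser N u vv)) q = 1"
    using I[rule_format, of K X]
    by (simp add: valid_var_def wedge_def pb_def hamiltonian_two_form_def hamiltonian_def dvar_def)
  have "?W K v = hamiltonian N u pp v K q \<and> ?W X v = hamiltonian N u pp v X q" if "valid_var v" for v
    using that I[rule_format, of K v] I[rule_format, of X v]
    by (cases v) (auto simp: valid_var_def hamiltonian_two_form_def hamiltonian_def dvar_def)
  then have H: "hamilton_eqs (hamiltonian N u pp) (Lser u) q"
    "hamilton_eqs (hamiltonian N u pp) (Mser N u vv) q"
    using hamilton_eqs_iff_wedge[OF LM] by blast+
  have "dlogP N pp (T n) q = D S (Bser u n) q - pb (dlogP N pp) (grad (Bser u n)) q" if "n \<ge> 1" for n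
    using I[rule_format, of S "T n"] wedge_eq_pb_hamiltonians[OF LM H, of S "T n"] that
    by (simp add: valid_var_def hamiltonian_two_form_def hamiltonian_def grad_def algebra_simps)
  with LM H show "dcmKP_hamiltonian_at N u pp vv q"
    unfolding dcmKP_hamiltonian_at_def by blast
next
  assume "dcmKP_hamiltonian_at N u pp vv q"
  then have LM: "pb (grad (Lser u)) (grad (Mser N u vv)) q = 1"
    and HL: "hamilton_eqs (hamiltonian N u pp) (Lser u) q"
    and HM: "hamilton_eqs (hamiltonian N u pp) (Mser N u vv) q"
    and logP: "\<forall>n\<ge>1. dlogP N pp (T n) q = D S (Bser u n) q - pb (dlogP N pp) (grad (Bser u n)) q"
    unfolding dcmKP_hamiltonian_at_def by blast+
  have "\<forall>m\<ge>1. \<forall>n\<ge>1.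
      D (T m) (Bser u n) q - D (T n) (Bser u m) q = pb (grad (Bser u m)) (grad (Bser u n)) q"
    using zero_curvature[OF u q] HL unfolding hamilton_eqs_hamiltonian_iff by blast
  then show "\<forall>a b. valid_var a \<and> valid_var b \<longrightarrow> ?W a b = ?\<Omega> a b"
    using wedge_eq_pb_hamiltonians[OF LM HL HM] pb_hamiltonian_eq_two_form logP by metis
qed

theorem mainTheorem8:
  fixes N :: nat
    and u :: "nat \<Rightarrow> pt \<Rightarrow> real"
    and pp :: "nat \<Rightarrow> pt \<Rightarrow> real"
    and vv :: "nat \<Rightarrow> pt \<Rightarrow> real"
  assumes "N \<ge> 1"
    and "\<forall>q \<in> dom_pt. pp 0 q \<noteq> 0"
    and "\<forall>n \<ge> 1. has_pdiffs (u n)"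
    and "\<forall>n < N. has_pdiffs (pp n)"
    and "\<forall>n \<ge> 1. has_pdiffs (vv n)"
  shows "dcmKP_system N u pp vv \<longleftrightarrow> two_form_identity N u pp vv"
proof -
  have "two_form_identity N u pp vv \<longleftrightarrow> (\<forall>q\<in>dom_pt. \<forall>a b. valid_var a \<and> valid_var b \<longrightarrow>
      wedge (grad (Lser u)) (grad (Mser N u vv)) a b q = hamiltonian_two_form (hamiltonian N u pp) a b q)"
    unfolding two_form_identity_def using two_form_rhs_eq by auto
  also have "\<dots> \<longleftrightarrow> (\<forall>q\<in>dom_pt. dcmKP_hamiltonian_at N u pp vv q)"
    using two_form_identity_at_iff[OF assms(3)] by blast
  also have "\<dots> \<longleftrightarrow> dcmKP_system N u pp vv"
    by (rule dcmKP_system_iff_hamiltonian[symmetric])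
  finally show ?thesis ..
qed

end
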